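(* The map $\phi_{s'} : \mathbf{ASM} \to \mathbb{K}(q)$ linearly defined, for any $s' \in \{\operatorname{se}, \operatorname{nw}, \operatorname{sw}, \operatorname{ne}\}$ and any ASM $\delta$ of size $n$ by $\phi_{s'}(\mathbf{F}_{M^\delta}) := \frac{q^{s'(\delta)}}{[n]_q!}$ is an algebra morphism.
   Context: Let $\mathbb{K}$ be a field of characteristic zero; $[n]_q := 1 + q + \dots + q^{n-1}$ and $[n]_q! := [1]_q \cdots [n]_q$, $[0]_q! := 1$. An alternating sign matrix (ASM) of size $n$ is an $n\times n$ matrix with entries in $\{0,+,-\}$ (read as $0,1,-1$) such that every row and column starts and ends (ignoring zeros) with $+$ and in each row and column the $+$ and $-$ alternate. For an ASM $\delta$, $M^\delta$ is the $\{0,1\}$-matrix with $M^\delta_{ij}=1$ iff $\delta_{ij}\ne0$. $\mathbf{PM}_1$ is the Hopf algebra with basis $(\mathbf{F}_M)$ indexed by $\{0,1\}$-square matrices with no null row or column, with product $\mathbf{F}_{M_1}\cdot\mathbf{F}_{M_2} = \sum \mathbf{F}_M$ over all $M$ obtained by shuffling the columns of $M_1$ (with an $n_2\times n_1$ zero block placed below) with the columns of $M_2$ (with an $n_1\times n_2$ zero block placed above), $n_i$ the sizes. $\mathbf{ASM}$ is the Hopf subalgebra of $\mathbf{PM}_1$ spanned by the $\mathbf{F}_{M^\delta}$, graded by the size of $\delta$. Each ASM is in bijection with a six-vertex configuration on the $n\times n$ grid with domain wall boundary conditions (horizontal boundary edges point inward, vertical boundary edges point outward); zero entries correspond to the four vertex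 types $\operatorname{ne}$ (vertical edges pointing up, horizontal edges pointing right), $\operatorname{nw}$ (up, left), $\operatorname{se}$ (down, right), $\operatorname{sw}$ (down, left), while $+$ and $-$ entries are the two other vertex types. Equivalently, for a zero entry $\delta_{ij}$, with $r = \sum_{j'<j}\delta_{ij'}$ and $c = \sum_{i'<i}\delta_{i'j}$ (both in $\{0,1\}$), its type is $\operatorname{ne}$ if $(r,c)=(0,0)$, $\operatorname{nw}$ if $(r,c)=(1,0)$, $\operatorname{se}$ if $(r,c)=(0,1)$, $\operatorname{sw}$ if $(r,c)=(1,1)$. For $s'$ among these types, $s'(\delta)$ is the number of vertices of type $s'$ in the configuration of $\delta$. *)

theory Defs
  imports "HOL-Computational_Algebra.Polynomial" "HOL-Computational_Algebra.Fraction_Field"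
begin

(* An n x n matrix is a function nat => nat => int, required to vanish outside {0..<n}^2.
   Entries +,-,0 are read as 1,-1,0. *)

definition alt_signs :: "int list \<Rightarrow> bool" where
  "alt_signs xs \<longleftrightarrow> odd (length xs) \<and>
     (\<forall>k<length xs. xs ! k = (if even k then 1 else -1))"

definition is_asm :: "nat \<Rightarrow> (nat \<Rightarrow> nat \<Rightarrow> int) \<Rightarrow> bool" where
  "is_asm n d \<longleftrightarrow>
     (\<forall>i j. d i j \<in> {-1, 0, 1}) \<and>
     (\<forall>i j. \<not> (i < n \<and> j < n) \<longrightarrow> d i j = 0) \<and>
     (\<forall>i<n. alt_signs (filter (\<lambda>x. x \<noteq> 0) (map (\<lambda>j. d i j) [0..<n]))) \<and>
     (\<forall>j<n. alt_signs (filter (\<lambda>x. x \<noteq> 0) (map (\<lambda>i. d i j) [0..<n])))"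

definition supp :: "nat \<Rightarrow> (nat \<Rightarrow> nat \<Rightarrow> int) \<Rightarrow> nat \<Rightarrow> nat \<Rightarrow> bool" where
  "supp n d i j \<longleftrightarrow> i < n \<and> j < n \<and> d i j \<noteq> 0"

datatype vtype = NE | NW | SE | SW

definition vtype_of :: "(nat \<Rightarrow> nat \<Rightarrow> int) \<Rightarrow> nat \<Rightarrow> nat \<Rightarrow> vtype" where
  "vtype_of d i j =
     (let r = (\<Sum>j'<j. d i j'); c = (\<Sum>i'<i. d i' j) in
      if r = 0 \<and> c = 0 then NE
      else if r = 1 \<and> c = 0 then NW
      else if r = 0 \<and> c = 1 then SE
      else SW)"

definition vcount :: "vtype \<Rightarrow> nat \<Rightarrow> (nat \<Rightarrow> nat \<Rightarrow> int) \<Rightarrow> nat" where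
  "vcount s n d = card {(i, j). i < n \<and> j < n \<and> d i j = 0 \<and> vtype_of d i j = s}"

definition asm_of :: "nat \<Rightarrow> (nat \<Rightarrow> nat \<Rightarrow> bool) \<Rightarrow> (nat \<Rightarrow> nat \<Rightarrow> int)" where
  "asm_of n M = (THE d. is_asm n d \<and> supp n d = M)"

definition qvar :: "'k::field_char_0 poly fract" where
  "qvar = Fract [:0, 1:] 1"

definition qint :: "nat \<Rightarrow> 'k::field_char_0 poly fract" where
  "qint n = (\<Sum>i<n. qvar ^ i)"

definition qfact :: "nat \<Rightarrow> 'k::field_char_0 poly fract" where
  "qfact n = (\<Prod>k\<in>{1..n}. qint k)"

(* phi_{s'} on the basis element F_M, M = M^delta, delta an ASM of size n *)
definition phi :: "vtype \<Rightarrow> nat \<Rightarrow> (nat \<Rightarrow> nat \<Rightarrow> bool) \<Rightarrow> 'k::field_char_0 poly fract" where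
  "phi s n M = qvar ^ vcount s n (asm_of n M) / qfact n"

(* Column shuffles: S \<subseteq> {0..<n1+n2}, card S = n1, are the positions of the columns of M1
   (padded below by an n2 x n1 zero block); the other positions receive the columns of M2
   (padded above by an n1 x n2 zero block), each family in its original order. *)
definition shuffle_sets :: "nat \<Rightarrow> nat \<Rightarrow> nat set set" where
  "shuffle_sets n1 n2 = {S. S \<subseteq> {0..<n1 + n2} \<and> card S = n1}"

definition shuffle_mat :: "nat \<Rightarrow> nat \<Rightarrow> nat set \<Rightarrow> (nat \<Rightarrow> nat \<Rightarrow> bool) \<Rightarrow>
    (nat \<Rightarrow> nat \<Rightarrow> bool) \<Rightarrow> nat \<Rightarrow> nat \<Rightarrow> bool" where
  "shuffle_mat n1 n2 S M1 M2 i k =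
     (i < n1 + n2 \<and> k < n1 + n2 \<and>
      (if k \<in> S then i < n1 \<and> M1 i (card {x\<in>S. x < k})
       else n1 \<le> i \<and> M2 (i - n1) (card {x. x < k \<and> x \<notin> S})))"

(* the empty matrix (size 0), i.e. the unit of the algebra *)
definition empty_mat :: "nat \<Rightarrow> nat \<Rightarrow> bool" where
  "empty_mat i j = False"

end

theory Submission
  imports Defs
begin

text \<open>Putting the columns of \<open>\<delta>\<^sub>1\<close> (in the top rows) at the positions in \<open>S\<close> and the
  columns of \<open>\<delta>\<^sub>2\<close> (in the bottom rows) at the remaining positions gives an ASM \<open>\<delta>\<close> whose
  support is the shuffled matrix. In the two nonzero blocks the six-vertex configuration of \<open>\<delta>\<close> is
  that of \<open>\<delta>\<^sub>1\<close> and \<open>\<delta>\<^sub>2\<close>. In a zero column of the other two blocks the vertex types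
  only depend on the row prefix sums of one factor, and since every column of an ASM sums to \<open>1\<close>,
  exactly \<open>m\<close> of these prefix sums equal \<open>1\<close> after \<open>m\<close> columns. Hence
  \<open>s'(\<delta>) = s'(\<delta>\<^sub>1) + s'(\<delta>\<^sub>2) + st(S)\<close> for a statistic \<open>st\<close> of the shuffle alone, and
  \<open>\<Sum>\<^sub>S q\<^bsup>st(S)\<^esup>\<close> satisfies the \<open>q\<close>-Pascal recurrence, so it equals
  \<open>[n\<^sub>1 + n\<^sub>2]\<^sub>q! / ([n\<^sub>1]\<^sub>q! [n\<^sub>2]\<^sub>q!)\<close>.\<close>

section \<open>Alternating sign matrices\<close>

lemma sum_alternating_signs: "(\<Sum>k<(n::nat). if even k then 1 else -1 :: int) = of_bool (odd n)"
  by (induction n) auto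

lemma alt_signs_sum_take:
  assumes "alt_signs ys"
  shows "sum_list (take m ys) = of_bool (odd (min m (length ys)))"
proof -
  have "sum_list (take m ys) = (\<Sum>k<min m (length ys). ys ! k)"
    by (simp add: sum_list_sum_nth atLeast0LessThan min.commute)
  also have "\<dots> = (\<Sum>k<min m (length ys). if even k then 1 else -1)"
    using assms by (auto simp: alt_signs_def intro!: sum.cong)
  finally show ?thesis by (simp only: sum_alternating_signs)
qed

lemma sum_list_filter_nonzero: "sum_list (filter (\<lambda>x. x \<noteq> 0) xs) = sum_list (xs :: int list)"
  by (induction xs) auto

lemma filter_take_eq_take_filter:
  "filter P (take m xs) = take (length (filter P (take m xs))) (filter P xs)"
proof -
  have "filter P xs = filter P (take m xs) @ filter P (drop m xs)"
    by (metis append_take_drop_id filter_append)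
  then show ?thesis by simp
qed

lemma alt_signs_nonzero_sum_take:
  assumes "alt_signs (filter (\<lambda>x. x \<noteq> 0) xs)"
  shows "sum_list (take m (xs :: int list)) \<in> {0, 1}"
proof -
  let ?L = "length (filter (\<lambda>x. x \<noteq> 0) (take m xs))"
  have "sum_list (take m xs) = sum_list (take ?L (filter (\<lambda>x. x \<noteq> 0) xs))"
    by (simp only: sum_list_filter_nonzero[of "take m xs", symmetric]
        filter_take_eq_take_filter[of _ m xs, symmetric])
  then show ?thesis
    by (simp add: alt_signs_sum_take[OF assms])
qed

lemma alt_signs_nonzero_sum:
  assumes "alt_signs (filter (\<lambda>x. x \<noteq> 0) xs)"
  shows "sum_list (xs :: int list) = 1"
  using alt_signs_sum_take[OF assms, of "length xs"] assms
  by (simp add: alt_signs_def sum_list_filter_nonzero)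

lemma is_asm_values: "is_asm n d \<Longrightarrow> d i j \<in> {-1, 0, 1}"
  by (simp add: is_asm_def)

lemma is_asm_outside: "is_asm n d \<Longrightarrow> \<not> (i < n \<and> j < n) \<Longrightarrow> d i j = 0"
  by (simp add: is_asm_def)

lemma is_asm_row: "is_asm n d \<Longrightarrow> i < n \<Longrightarrow> alt_signs (filter (\<lambda>x. x \<noteq> 0) (map (d i) [0..<n]))"
  by (simp add: is_asm_def)

lemma is_asm_col: "is_asm n d \<Longrightarrow> j < n \<Longrightarrow> alt_signs (filter (\<lambda>x. x \<noteq> 0) (map (\<lambda>i. d i j) [0..<n]))"
  by (simp add: is_asm_def)

lemma is_asm_transpose: "is_asm n d \<Longrightarrow> is_asm n (\<lambda>i j. d j i)"
  unfolding is_asm_def by auto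

lemma asm_row_sum_lessThan:
  assumes "is_asm n d"
  shows "(\<Sum>j<m. d i j) \<in> {0, 1}"
proof (cases "i < n")
  case False
  then show ?thesis using is_asm_outside[OF assms] by simp
next
  case True
  have "(\<Sum>j<m. d i j) = (\<Sum>j<min m n. d i j)"
    by (rule sum.mono_neutral_right) (auto intro!: is_asm_outside[OF assms])
  also have "\<dots> = sum_list (take m (map (d i) [0..<n]))"
  proof -
    have "take m [0..<n] = [0..<min m n]" by (cases "m \<le> n") auto
    then show ?thesis by (simp add: take_map atLeast0LessThan flip: sum_set_upt_conv_sum_list_nat)
  qed
  finally show ?thesis
    using alt_signs_nonzero_sum_take[OF is_asm_row[OF assms True]] by simp
qed

lemma asm_row_sum:
  assumes "is_asm n d" "i < n"
  shows "(\<Sum>j<n. d i j) = 1"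
  using alt_signs_nonzero_sum[OF is_asm_row[OF assms]]
  by (simp add: atLeast0LessThan flip: sum_set_upt_conv_sum_list_nat)

lemma asm_col_sum: "is_asm n d \<Longrightarrow> j < n \<Longrightarrow> (\<Sum>i<n. d i j) = 1"
  using asm_row_sum[OF is_asm_transpose] .

text \<open>A nonzero entry must bring the partial row sum, which stays in \<open>{0, 1}\<close>, to the other value.\<close>

lemma asm_entry_eq_prefix_sum:
  assumes "is_asm n d" "d i j \<noteq> 0"
  shows "d i j = 1 - 2 * (\<Sum>j'<j. d i j')"
  using asm_row_sum_lessThan[OF assms(1), where i = i and m = j]
    asm_row_sum_lessThan[OF assms(1), where i = i and m = "Suc j"]
    is_asm_values[OF assms(1), of i j] assms(2)
  by auto

lemma asm_eqI:
  assumes d: "is_asm n d" and d': "is_asm n d'" and supp: "supp n d = supp n d'"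
  shows "d = d'"
proof (intro ext)
  fix i j
  show "d i j = d' i j"
  proof (induction j rule: less_induct)
    case (less j)
    show ?case
    proof (cases "i < n \<and> j < n")
      case False
      then show ?thesis using is_asm_outside[OF d] is_asm_outside[OF d'] by simp
    next
      case True
      then have "(d i j = 0) = (d' i j = 0)"
        using fun_cong[OF fun_cong[OF supp, of i], of j] by (simp add: supp_def)
      moreover have "(\<Sum>j'<j. d i j') = (\<Sum>j'<j. d' i j')"
        using less.IH by simp
      ultimately show ?thesis
        using asm_entry_eq_prefix_sum[OF d, of i j] asm_entry_eq_prefix_sum[OF d', of i j] by metis
    qed
  qed
qed

lemma asm_of_supp: "is_asm n d \<Longrightarrow> asm_of n (supp n d) = d"
  unfolding asm_of_def by (rule the_equality) (auto intro: asm_eqI)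

definition vertex_type :: "int \<Rightarrow> int \<Rightarrow> vtype" where
  "vertex_type r c =
     (if r = 0 \<and> c = 0 then NE else if r = 1 \<and> c = 0 then NW else if r = 0 \<and> c = 1 then SE else SW)"

lemma vtype_of_eq_vertex_type: "vtype_of d i j = vertex_type (\<Sum>j'<j. d i j') (\<Sum>i'<i. d i' j)"
  by (simp add: vtype_of_def vertex_type_def Let_def)

text \<open>The number of vertices of type \<open>s\<close> in a zero column of height \<open>n\<close> placed after the
  first \<open>m\<close> columns of an ASM of size \<open>n\<close>, with column prefix sum \<open>c\<close> throughout; exactly \<open>m\<close>
  rows then have row prefix sum \<open>1\<close> (see \<open>asm_zero_column_count\<close>).\<close>

definition zero_column_count :: "vtype \<Rightarrow> int \<Rightarrow> nat \<Rightarrow> nat \<Rightarrow> nat" where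
  "zero_column_count s c n m = of_bool (vertex_type 0 c = s) * (n - m) + of_bool (vertex_type 1 c = s) * m"

lemma asm_sum_of_bool_row_prefix_one:
  assumes "is_asm n d" "m \<le> n"
  shows "(\<Sum>i<n. of_bool ((\<Sum>j<m. d i j) = 1) :: nat) = m"
proof -
  have "int (\<Sum>i<n. of_bool ((\<Sum>j<m. d i j) = 1)) = (\<Sum>i<n. \<Sum>j<m. d i j)"
    unfolding of_nat_sum using asm_row_sum_lessThan[OF assms(1)]
    by (intro sum.cong) fastforce+
  also have "\<dots> = (\<Sum>j<m. \<Sum>i<n. d i j)"
    by (rule sum.swap)
  also have "\<dots> = int m"
    using assms by (simp add: asm_col_sum)
  finally show ?thesis by linarith
qed

lemma asm_zero_column_count:
  assumes "is_asm n d" "m \<le> n"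
  shows "(\<Sum>i<n. of_bool (vertex_type (\<Sum>j<m. d i j) c = s)) = zero_column_count s c n m"
proof -
  define p where "p i = (\<Sum>j<m. d i j)" for i
  have ones: "(\<Sum>i<n. of_bool (p i = 1) :: nat) = m"
    using asm_sum_of_bool_row_prefix_one[OF assms] by (simp add: p_def)
  have "(\<Sum>i<n. of_bool (p i = 0) :: nat) + (\<Sum>i<n. of_bool (p i = 1)) = (\<Sum>i<n. 1)"
    unfolding sum.distrib[symmetric] using asm_row_sum_lessThan[OF assms(1)]
    by (intro sum.cong) (auto simp: p_def)
  then have zeros: "(\<Sum>i<n. of_bool (p i = 0) :: nat) = n - m"
    using ones by simp
  have "(of_bool (vertex_type (p i) c = s) :: nat) =
      of_bool (vertex_type 0 c = s) * of_bool (p i = 0) + of_bool (vertex_type 1 c = s) * of_bool (p i = 1)"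
    for i
    using asm_row_sum_lessThan[OF assms(1), where m = m and i = i] by (auto simp: p_def)
  then have "(\<Sum>i<n. of_bool (vertex_type (p i) c = s)) = zero_column_count s c n m"
    by (simp add: sum.distrib zeros ones zero_column_count_def del: sum_of_bool_eq flip: sum_distrib_left)
  then show ?thesis by (simp add: p_def)
qed

definition column_vertices :: "vtype \<Rightarrow> nat \<Rightarrow> (nat \<Rightarrow> nat \<Rightarrow> int) \<Rightarrow> nat \<Rightarrow> nat" where
  "column_vertices s n d j = (\<Sum>i<n. of_bool (d i j = 0 \<and> vtype_of d i j = s))"

lemma vcount_eq_sum_column_vertices: "vcount s n d = (\<Sum>j<n. column_vertices s n d j)"
proof -
  have "{(i, j). i < n \<and> j < n \<and> d i j = 0 \<and> vtype_of d i j = s}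
      = (SIGMA i:{..<n}. {..<n} \<inter> {j. d i j = 0 \<and> vtype_of d i j = s})"
    by auto
  then have "vcount s n d = (\<Sum>i<n. \<Sum>j<n. of_bool (d i j = 0 \<and> vtype_of d i j = s))"
    by (simp add: vcount_def)
  also have "\<dots> = (\<Sum>j<n. \<Sum>i<n. of_bool (d i j = 0 \<and> vtype_of d i j = s))"
    by (rule sum.swap)
  finally show ?thesis
    unfolding column_vertices_def .
qed

section \<open>Counting positions below a bound\<close>

definition count_below :: "nat set \<Rightarrow> nat \<Rightarrow> nat" where
  "count_below T k = card {x \<in> T. x < k}"

lemma count_below_0 [simp]: "count_below T 0 = 0"
  by (simp add: count_below_def)

lemma count_below_Suc: "count_below T (Suc k) = count_below T k + of_bool (k \<in> T)"
proof -
  have "{x \<in> T. x < Suc k} = (if k \<in> T then insert k {x \<in> T. x < k} else {x \<in> T. x < k})"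
    by (auto simp: less_Suc_eq)
  then show ?thesis by (simp add: count_below_def)
qed

lemma count_below_mono: "k \<le> k' \<Longrightarrow> count_below T k \<le> count_below T k'"
  unfolding count_below_def by (rule card_mono) auto

lemma count_below_less: "k \<in> T \<Longrightarrow> k < k' \<Longrightarrow> count_below T k < count_below T k'"
  using count_below_Suc[of T k] count_below_mono[of "Suc k" k' T] by simp

lemma count_below_eq_card: "T \<subseteq> {..<N} \<Longrightarrow> count_below T N = card T"
  unfolding count_below_def by (rule arg_cong[where f = card]) auto

lemma count_below_compl_eq: "S \<subseteq> {..<N} \<Longrightarrow> count_below (- S) N = N - card S"
proof -
  assume "S \<subseteq> {..<N}"
  moreover have "{x \<in> - S. x < N} = {..<N} - S" by auto
  ultimately show ?thesis by (simp add: count_below_def card_Diff_subset finite_subset)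
qed

lemma count_below_le_card: "finite T \<Longrightarrow> count_below T k \<le> card T"
  unfolding count_below_def by (rule card_mono) auto

lemma sum_count_below_reindex:
  "(\<Sum>k<N. if k \<in> T then f (count_below T k) else 0) = (\<Sum>j<count_below T N. f j)"
  by (induction N) (auto simp: count_below_Suc)

lemma sum_of_bool_count_below: "(\<Sum>k<N. of_bool (k \<in> T) :: nat) = count_below T N"
  by (induction N) (auto simp: count_below_Suc)

lemma sum_lessThan_add: "(\<Sum>i<a + b. f i) = (\<Sum>i<a. f i) + (\<Sum>t<b. f (a + t :: nat))"
  by (induction b) (simp_all add: add.assoc)

lemma sum_if_count_below:
  "(\<Sum>k<N. if k \<in> T then f (count_below T k) else g (count_below (- T) k))
     = (\<Sum>j<count_below T N. f j) + (\<Sum>j<count_below (- T) N. g j)"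
proof -
  have "(\<Sum>k<N. if k \<in> T then f (count_below T k) else g (count_below (- T) k))
      = (\<Sum>k<N. if k \<in> T then f (count_below T k) else 0)
        + (\<Sum>k<N. if k \<in> - T then g (count_below (- T) k) else 0)"
    unfolding sum.distrib[symmetric] by (rule sum.cong) auto
  then show ?thesis by (simp only: sum_count_below_reindex)
qed

lemma filter_nonzero_map_count_below:
  assumes "\<And>k. k < N \<Longrightarrow> f k = (if k \<in> T then g (count_below T k) else 0)"
  shows "filter (\<lambda>x. x \<noteq> 0) (map f [0..<N]) = filter (\<lambda>x. x \<noteq> (0::int)) (map g [0..<count_below T N])"
  using assms by (induction N) (auto simp: count_below_Suc)

section \<open>The \<open>q\<close>-Pascal recurrence\<close>

lemma qint_add: "qint (a + b) = qint a + qvar ^ a * qint b"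
  by (induction b) (simp_all add: qint_def algebra_simps power_add)

lemma qfact_Suc: "qfact (Suc n) = qfact n * qint (Suc n)"
  by (simp add: qfact_def prod.cl_ivl_Suc)

text \<open>Evaluating the numerator at \<open>q = 0\<close> gives \<open>1\<close>.\<close>

lemma qint_nonzero:
  assumes "k \<ge> 1"
  shows "(qint k :: 'k::field_char_0 poly fract) \<noteq> 0"
proof
  have qvar_power: "(qvar :: 'k poly fract) ^ i = Fract ([:0, 1:] ^ i) 1" for i
    by (induction i) (simp_all add: qvar_def One_fract_def)
  have "(qint k :: 'k poly fract) = Fract (\<Sum>i<k. [:0, 1:] ^ i) 1"
    by (induction k) (simp_all add: qint_def qvar_power Zero_fract_def)
  moreover assume "(qint k :: 'k poly fract) = 0"
  ultimately have "Fract (\<Sum>i<k. [:0, 1:] ^ i :: 'k poly) 1 = Fract 0 1"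
    by (simp add: Zero_fract_def)
  then have "poly (\<Sum>i<k. [:0, 1:] ^ i :: 'k poly) 0 = 0"
    by (simp add: eq_fract)
  moreover have "poly (\<Sum>i<k. [:0, 1:] ^ i :: 'k poly) 0 = 1"
    using assms by (simp add: poly_sum power_0_left sum.If_cases)
  ultimately show False by simp
qed

lemma qfact_nonzero: "(qfact n :: 'k::field_char_0 poly fract) \<noteq> 0"
  by (simp add: qfact_def qint_nonzero)

lemma qfact_add_of_q_pascal:
  fixes g :: "nat \<Rightarrow> nat \<Rightarrow> 'k::field_char_0 poly fract" and u v :: "nat \<Rightarrow> 'k poly fract"
  assumes qint_split: "\<And>a b. u b * qint a + v a * qint b = qint (a + b)"
    and g_left: "\<And>b. g 0 b = 1" and g_right: "\<And>a. g a 0 = 1"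
    and g_Suc: "\<And>a b. g (Suc a) (Suc b) = u (Suc b) * g a (Suc b) + v (Suc a) * g (Suc a) b"
  shows "g a b * qfact a * qfact b = qfact (a + b)"
proof (induction a arbitrary: b)
  case 0
  show ?case by (simp add: g_left qfact_def)
next
  case (Suc a)
  note IH_a = Suc.IH
  show ?case
  proof (induction b)
    case 0
    show ?case by (simp add: g_right qfact_def)
  next
    case (Suc b)
    have "g (Suc a) (Suc b) * qfact (Suc a) * qfact (Suc b)
        = u (Suc b) * qint (Suc a) * (g a (Suc b) * qfact a * qfact (Suc b))
          + v (Suc a) * qint (Suc b) * (g (Suc a) b * qfact (Suc a) * qfact b)"
      by (simp add: g_Suc qfact_Suc[of a] qfact_Suc[of b] algebra_simps)
    also have "\<dots> = qfact (a + Suc b) * (u (Suc b) * qint (Suc a) + v (Suc a) * qint (Suc b))"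
      using Suc.IH IH_a[of "Suc b"] by (simp add: algebra_simps)
    also have "\<dots> = qfact (Suc a + Suc b)"
      by (simp add: qint_split qfact_Suc)
    finally show ?case .
  qed
qed

section \<open>The statistic of a shuffle\<close>

text \<open>The number of vertices of type \<open>s\<close> in the two zero blocks of the shuffled ASM.\<close>

definition shuffle_stat :: "vtype \<Rightarrow> nat \<Rightarrow> nat \<Rightarrow> nat set \<Rightarrow> nat" where
  "shuffle_stat s n1 n2 S =
     (\<Sum>k<n1 + n2. if k \<in> S then zero_column_count s 1 n2 (count_below (- S) k)
                   else zero_column_count s 0 n1 (count_below S k))"

text \<open>The exponents in the \<open>q\<close>-Pascal recurrence of \<open>shuffle_stat\<close>, according to whether the last
  position of the shuffle carries a column of the first or of the second factor.\<close>

definition last_left_exp :: "vtype \<Rightarrow> nat \<Rightarrow> nat" where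
  "last_left_exp s n2 = (if s = NE \<or> s = SW then n2 else 0)"

definition last_right_exp :: "vtype \<Rightarrow> nat \<Rightarrow> nat" where
  "last_right_exp s n1 = (if s = NW \<or> s = SE then n1 else 0)"

lemma mem_shuffle_sets: "S \<in> shuffle_sets n1 n2 \<longleftrightarrow> S \<subseteq> {..<n1 + n2} \<and> card S = n1"
  by (simp add: shuffle_sets_def atLeast0LessThan)

lemma shuffle_stat_insert_last:
  assumes "S \<in> shuffle_sets n1 n2"
  shows "shuffle_stat s (Suc n1) n2 (insert (n1 + n2) S) = last_left_exp s n2 + shuffle_stat s n1 n2 S"
proof -
  define m where "m = n1 + n2"
  define S' where "S' = insert m S"
  have S: "S \<subseteq> {..<m}" "finite S" "card S = n1"
    using assms finite_subset[OF _ finite_lessThan] by (auto simp: mem_shuffle_sets m_def)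
  have count_S': "count_below S' k = count_below S k" "count_below (- S') k = count_below (- S) k"
    if "k \<le> m" for k
    using that unfolding count_below_def S'_def by (auto intro!: arg_cong[where f = card])
  define F where "F k = (if k \<in> S' then zero_column_count s 1 n2 (count_below (- S') k)
                          else zero_column_count s 0 (Suc n1) (count_below S' k))" for k
  have F_less: "F k = (if k \<in> S then zero_column_count s 1 n2 (count_below (- S) k)
                          else zero_column_count s 0 n1 (count_below S k))
                    + of_bool (s = NE) * of_bool (k \<notin> S)" if "k < m" for k
    using that count_S'[of k] count_below_le_card[OF S(2), of k] S(3)
    by (auto simp: F_def S'_def zero_column_count_def vertex_type_def)
  have F_last: "F m = of_bool (s = SW) * n2"
    using count_S'[of m] count_below_compl_eq[OF S(1)] S(3)
    by (simp add: F_def S'_def m_def zero_column_count_def vertex_type_def)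
  have "(\<Sum>k<m. of_bool (k \<notin> S) :: nat) = count_below (- S) m"
    using sum_of_bool_count_below[where N = m and T = "- S"] by simp
  then have "(\<Sum>k<m. F k) = shuffle_stat s n1 n2 S + of_bool (s = NE) * count_below (- S) m"
    by (simp add: F_less sum.distrib shuffle_stat_def m_def flip: sum_distrib_left)
  then have "shuffle_stat s (Suc n1) n2 S' = shuffle_stat s n1 n2 S + of_bool (s = NE) * n2 + of_bool (s = SW) * n2"
    using count_below_compl_eq[OF S(1)] S(3) F_last by (simp add: shuffle_stat_def m_def F_def)
  also have "\<dots> = last_left_exp s n2 + shuffle_stat s n1 n2 S"
    by (auto simp: last_left_exp_def)
  finally show ?thesis by (simp add: S'_def m_def)
qed

lemma shuffle_stat_Suc_right:
  assumes "S \<in> shuffle_sets n1 n2"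
  shows "shuffle_stat s n1 (Suc n2) S = last_right_exp s n1 + shuffle_stat s n1 n2 S"
proof -
  define m where "m = n1 + n2"
  have S: "S \<subseteq> {..<m}" "card S = n1"
    using assms by (auto simp: mem_shuffle_sets m_def)
  have count_S: "count_below S m = n1" "count_below (- S) m = n2"
    using count_below_eq_card[OF S(1)] count_below_compl_eq[OF S(1)] S(2) by (simp_all add: m_def)
  define F where "F k = (if k \<in> S then zero_column_count s 1 (Suc n2) (count_below (- S) k)
                          else zero_column_count s 0 n1 (count_below S k))" for k
  have F_less: "F k = (if k \<in> S then zero_column_count s 1 n2 (count_below (- S) k)
                          else zero_column_count s 0 n1 (count_below S k))
                    + of_bool (s = SE) * of_bool (k \<in> S)" if "k < m" for k
    using that count_below_mono[of k m "- S"] count_S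
    by (auto simp: F_def zero_column_count_def vertex_type_def)
  have F_last: "F m = of_bool (s = NW) * n1"
    using S(1) count_S by (auto simp: F_def zero_column_count_def vertex_type_def)
  have "(\<Sum>k<m. F k) = shuffle_stat s n1 n2 S + of_bool (s = SE) * n1"
    using sum_of_bool_count_below[where N = m and T = S] count_S
    by (simp add: F_less sum.distrib shuffle_stat_def m_def flip: sum_distrib_left)
  then have "shuffle_stat s n1 (Suc n2) S = shuffle_stat s n1 n2 S + of_bool (s = SE) * n1 + of_bool (s = NW) * n1"
    using F_last by (simp add: shuffle_stat_def m_def F_def)
  also have "\<dots> = last_right_exp s n1 + shuffle_stat s n1 n2 S"
    by (auto simp: last_right_exp_def)
  finally show ?thesis .
qed

lemma shuffle_sets_Suc_Suc:
  "shuffle_sets (Suc n1) (Suc n2) =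
     insert (n1 + Suc n2) ` shuffle_sets n1 (Suc n2) \<union> shuffle_sets (Suc n1) n2"
  (is "?L = ?A \<union> ?B")
proof (intro equalityI subsetI)
  fix S assume "S \<in> ?L"
  then have S: "S \<subseteq> {..<Suc (n1 + Suc n2)}" "card S = Suc n1"
    by (simp_all add: mem_shuffle_sets)
  show "S \<in> ?A \<union> ?B"
  proof (cases "n1 + Suc n2 \<in> S")
    case True
    have "finite S" using S(1) finite_subset by blast
    then have "S - {n1 + Suc n2} \<in> shuffle_sets n1 (Suc n2)"
      using S True by (auto simp: mem_shuffle_sets)
    moreover have "S = insert (n1 + Suc n2) (S - {n1 + Suc n2})"
      using True by blast
    ultimately show ?thesis by blast
  next
    case False
    then show ?thesis using S by (auto simp: mem_shuffle_sets less_Suc_eq)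
  qed
next
  fix S assume "S \<in> ?A \<union> ?B"
  then show "S \<in> ?L"
  proof
    assume "S \<in> ?A"
    then obtain T where T: "T \<subseteq> {..<n1 + Suc n2}" "card T = n1" "S = insert (n1 + Suc n2) T"
      by (auto simp: mem_shuffle_sets)
    moreover have "finite T" "n1 + Suc n2 \<notin> T" using T(1) finite_subset by auto
    ultimately show ?thesis by (auto simp: mem_shuffle_sets)
  qed (auto simp: mem_shuffle_sets)
qed

definition shuffle_gf :: "vtype \<Rightarrow> nat \<Rightarrow> nat \<Rightarrow> 'k::field_char_0 poly fract" where
  "shuffle_gf s n1 n2 = (\<Sum>S\<in>shuffle_sets n1 n2. qvar ^ shuffle_stat s n1 n2 S)"

lemma finite_shuffle_sets: "finite (shuffle_sets n1 n2)"
  unfolding shuffle_sets_def by (rule finite_subset[of _ "Pow {0..<n1 + n2}"]) auto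

lemma shuffle_gf_Suc_Suc:
  "(shuffle_gf s (Suc n1) (Suc n2) :: 'k::field_char_0 poly fract) =
     qvar ^ last_left_exp s (Suc n2) * shuffle_gf s n1 (Suc n2)
     + qvar ^ last_right_exp s (Suc n1) * shuffle_gf s (Suc n1) n2"
proof -
  let ?m = "n1 + Suc n2"
  let ?q = "\<lambda>S. (qvar :: 'k poly fract) ^ shuffle_stat s (Suc n1) (Suc n2) S"
  have inj: "inj_on (insert ?m) (shuffle_sets n1 (Suc n2))"
    by (rule inj_onI) (metis insert_ident lessThan_iff less_irrefl mem_shuffle_sets subsetD)
  have disj: "insert ?m ` shuffle_sets n1 (Suc n2) \<inter> shuffle_sets (Suc n1) n2 = {}"
    by (auto simp: mem_shuffle_sets)
  have "shuffle_gf s (Suc n1) (Suc n2) =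
      (\<Sum>S\<in>shuffle_sets n1 (Suc n2). ?q (insert ?m S)) + (\<Sum>S\<in>shuffle_sets (Suc n1) n2. ?q S)"
    unfolding shuffle_gf_def shuffle_sets_Suc_Suc
    by (simp only: sum.union_disjoint[OF finite_imageI[OF finite_shuffle_sets] finite_shuffle_sets disj]
        sum.reindex[OF inj] comp_def)
  also have "\<dots> = (\<Sum>S\<in>shuffle_sets n1 (Suc n2). qvar ^ last_left_exp s (Suc n2) * qvar ^ shuffle_stat s n1 (Suc n2) S)
      + (\<Sum>S\<in>shuffle_sets (Suc n1) n2. qvar ^ last_right_exp s (Suc n1) * qvar ^ shuffle_stat s (Suc n1) n2 S)"
    using shuffle_stat_insert_last[of _ n1 "Suc n2" s] shuffle_stat_Suc_right[of _ "Suc n1" n2 s]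
    by (simp add: power_add)
  finally show ?thesis
    by (simp add: shuffle_gf_def sum_distrib_left)
qed

lemma shuffle_gf_qfact:
  "(shuffle_gf s n1 n2 :: 'k::field_char_0 poly fract) * qfact n1 * qfact n2 = qfact (n1 + n2)"
proof (rule qfact_add_of_q_pascal[where u = "\<lambda>b. qvar ^ last_left_exp s b" and v = "\<lambda>a. qvar ^ last_right_exp s a"])
  show "qvar ^ last_left_exp s b * qint a + qvar ^ last_right_exp s a * qint b
      = (qint (a + b) :: 'k poly fract)" for a b
    using qint_add[of a b, where 'a = 'k] qint_add[of b a, where 'a = 'k]
    by (cases s) (simp_all add: last_left_exp_def last_right_exp_def add.commute)
next
  show "shuffle_gf s 0 n2 = (1 :: 'k poly fract)" for n2
  proof -
    have "shuffle_sets 0 n2 = {{}}"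
      by (auto simp: mem_shuffle_sets) (metis card_0_eq empty_iff finite_lessThan finite_subset)
    then show ?thesis
      by (simp add: shuffle_gf_def shuffle_stat_def zero_column_count_def count_below_def)
  qed
next
  show "shuffle_gf s n1 0 = (1 :: 'k poly fract)" for n1
  proof -
    have "shuffle_sets n1 0 = {{..<n1}}"
      by (auto simp: mem_shuffle_sets) (metis card_lessThan card_subset_eq finite_lessThan lessThan_iff)
    moreover have "count_below (- {..<n1}) k = 0" if "k < n1" for k
      using that by (auto simp: count_below_def)
    ultimately show ?thesis
      by (simp add: shuffle_gf_def shuffle_stat_def zero_column_count_def)
  qed
qed (rule shuffle_gf_Suc_Suc)

section \<open>The shuffled ASM\<close>

definition shuffle_asm :: "nat \<Rightarrow> nat \<Rightarrow> nat set \<Rightarrow> (nat \<Rightarrow> nat \<Rightarrow> int) \<Rightarrow> (nat \<Rightarrow> nat \<Rightarrow> int)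
    \<Rightarrow> nat \<Rightarrow> nat \<Rightarrow> int" where
  "shuffle_asm n1 n2 S d1 d2 i k =
     (if i < n1 + n2 \<and> k < n1 + n2 then
        if k \<in> S then (if i < n1 then d1 i (count_below S k) else 0)
        else (if n1 \<le> i then d2 (i - n1) (count_below (- S) k) else 0)
      else 0)"

context
  fixes n1 n2 :: nat and S :: "nat set" and d1 d2 :: "nat \<Rightarrow> nat \<Rightarrow> int"
  assumes S: "S \<in> shuffle_sets n1 n2" and d1: "is_asm n1 d1" and d2: "is_asm n2 d2"
begin

abbreviation D :: "nat \<Rightarrow> nat \<Rightarrow> int" where
  "D \<equiv> shuffle_asm n1 n2 S d1 d2"

lemma count_below_shuffle_total: "count_below S (n1 + n2) = n1" "count_below (- S) (n1 + n2) = n2"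
  using S count_below_eq_card count_below_compl_eq by (auto simp: mem_shuffle_sets)

lemma count_below_shuffle_less: "k \<in> S \<Longrightarrow> count_below S k < n1"
  using S count_below_less[of k S "n1 + n2"] count_below_shuffle_total by (auto simp: mem_shuffle_sets)

lemma count_below_compl_shuffle_less: "k < n1 + n2 \<Longrightarrow> k \<notin> S \<Longrightarrow> count_below (- S) k < n2"
  using count_below_less[of k "- S" "n1 + n2"] count_below_shuffle_total by auto

lemma count_below_shuffle_le: "k \<le> n1 + n2 \<Longrightarrow> count_below S k \<le> n1"
  using count_below_mono[of k "n1 + n2" S] count_below_shuffle_total by simp

lemma count_below_compl_shuffle_le: "k \<le> n1 + n2 \<Longrightarrow> count_below (- S) k \<le> n2"
  using count_below_mono[of k "n1 + n2" "- S"] count_below_shuffle_total by simp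

lemma shuffle_asm_top:
  "i < n1 \<Longrightarrow> k < n1 + n2 \<Longrightarrow> D i k = (if k \<in> S then d1 i (count_below S k) else 0)"
  by (simp add: shuffle_asm_def)

lemma shuffle_asm_bottom:
  "t < n2 \<Longrightarrow> k < n1 + n2 \<Longrightarrow> D (n1 + t) k = (if k \<in> S then 0 else d2 t (count_below (- S) k))"
  by (simp add: shuffle_asm_def)

lemma shuffle_asm_row_prefix_top:
  assumes "i < n1" "k \<le> n1 + n2"
  shows "(\<Sum>j<k. D i j) = (\<Sum>j<count_below S k. d1 i j)"
proof -
  have "(\<Sum>j<k. D i j) = (\<Sum>j<k. if j \<in> S then d1 i (count_below S j) else 0)"
    using assms by (intro sum.cong) (auto simp: shuffle_asm_top)
  then show ?thesis by (simp only: sum_count_below_reindex)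
qed

lemma shuffle_asm_row_prefix_bottom:
  assumes "t < n2" "k \<le> n1 + n2"
  shows "(\<Sum>j<k. D (n1 + t) j) = (\<Sum>j<count_below (- S) k. d2 t j)"
proof -
  have "(\<Sum>j<k. D (n1 + t) j) = (\<Sum>j<k. if j \<in> - S then d2 t (count_below (- S) j) else 0)"
    using assms by (intro sum.cong) (auto simp: shuffle_asm_bottom)
  then show ?thesis by (simp only: sum_count_below_reindex)
qed

lemma shuffle_asm_col_prefix_top:
  assumes "i \<le> n1" "k < n1 + n2"
  shows "(\<Sum>i'<i. D i' k) = (if k \<in> S then (\<Sum>i'<i. d1 i' (count_below S k)) else 0)"
  using assms by (simp add: shuffle_asm_top)

lemma shuffle_asm_col_prefix_bottom:
  assumes "t \<le> n2" "k < n1 + n2"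
  shows "(\<Sum>i'<n1 + t. D i' k) = (if k \<in> S then 1 else (\<Sum>t'<t. d2 t' (count_below (- S) k)))"
proof -
  have "(\<Sum>i'<n1 + t. D i' k) = (\<Sum>i'<n1. D i' k) + (\<Sum>t'<t. D (n1 + t') k)"
    by (rule sum_lessThan_add)
  then show ?thesis
    using assms asm_col_sum[OF d1 count_below_shuffle_less]
    by (simp add: shuffle_asm_top shuffle_asm_bottom)
qed

lemma vtype_of_shuffle_asm_top:
  assumes "i < n1" "k < n1 + n2"
  shows "vtype_of D i k = (if k \<in> S then vtype_of d1 i (count_below S k)
                           else vertex_type (\<Sum>j<count_below S k. d1 i j) 0)"
  using assms by (simp add: vtype_of_eq_vertex_type shuffle_asm_row_prefix_top shuffle_asm_col_prefix_top)

lemma vtype_of_shuffle_asm_bottom: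
  assumes "t < n2" "k < n1 + n2"
  shows "vtype_of D (n1 + t) k = (if k \<in> S then vertex_type (\<Sum>j<count_below (- S) k. d2 t j) 1
                                  else vtype_of d2 t (count_below (- S) k))"
  using assms
  by (simp add: vtype_of_eq_vertex_type shuffle_asm_row_prefix_bottom shuffle_asm_col_prefix_bottom)

lemma column_vertices_shuffle_asm:
  assumes k: "k < n1 + n2"
  shows "column_vertices s (n1 + n2) D k =
    (if k \<in> S then column_vertices s n1 d1 (count_below S k) + zero_column_count s 1 n2 (count_below (- S) k)
     else zero_column_count s 0 n1 (count_below S k) + column_vertices s n2 d2 (count_below (- S) k))"
proof -
  have split: "column_vertices s (n1 + n2) D k =
      (\<Sum>i<n1. of_bool (D i k = 0 \<and> vtype_of D i k = s))
      + (\<Sum>t<n2. of_bool (D (n1 + t) k = 0 \<and> vtype_of D (n1 + t) k = s))"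
    unfolding column_vertices_def by (rule sum_lessThan_add)
  show ?thesis
  proof (cases "k \<in> S")
    case True
    then show ?thesis
      unfolding split using k count_below_compl_shuffle_le[of k]
      by (simp add: shuffle_asm_top shuffle_asm_bottom vtype_of_shuffle_asm_top vtype_of_shuffle_asm_bottom
          column_vertices_def asm_zero_column_count[OF d2] del: sum_of_bool_eq)
  next
    case False
    then show ?thesis
      unfolding split using k count_below_shuffle_le[of k]
      by (simp add: shuffle_asm_top shuffle_asm_bottom vtype_of_shuffle_asm_top vtype_of_shuffle_asm_bottom
          column_vertices_def asm_zero_column_count[OF d1] del: sum_of_bool_eq)
  qed
qed

lemma vcount_shuffle_asm:
  "vcount s (n1 + n2) D = vcount s n1 d1 + vcount s n2 d2 + shuffle_stat s n1 n2 S"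
proof -
  have "vcount s (n1 + n2) D =
      (\<Sum>k<n1 + n2. if k \<in> S then column_vertices s n1 d1 (count_below S k)
                                else column_vertices s n2 d2 (count_below (- S) k))
      + shuffle_stat s n1 n2 S"
    unfolding vcount_eq_sum_column_vertices shuffle_stat_def sum.distrib[symmetric]
    by (rule sum.cong) (simp_all add: column_vertices_shuffle_asm)
  then show ?thesis
    by (simp add: sum_if_count_below count_below_shuffle_total vcount_eq_sum_column_vertices)
qed

lemma is_asm_shuffle_asm: "is_asm (n1 + n2) D"
  unfolding is_asm_def
proof (intro conjI allI impI)
  show "D i k \<in> {-1, 0, 1}" for i k
    using is_asm_values[OF d1] is_asm_values[OF d2] by (simp add: shuffle_asm_def)
  show "D i k = 0" if "\<not> (i < n1 + n2 \<and> k < n1 + n2)" for i k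
    using that unfolding shuffle_asm_def by (rule if_not_P)
next
  fix i assume i: "i < n1 + n2"
  show "alt_signs (filter (\<lambda>x. x \<noteq> 0) (map (D i) [0..<n1 + n2]))"
  proof (cases "i < n1")
    case True
    then show ?thesis
      using is_asm_row[OF d1 True] count_below_shuffle_total
      by (subst filter_nonzero_map_count_below[where T = S and g = "d1 i"]) (simp_all add: shuffle_asm_top)
  next
    case False
    then obtain t where t: "i = n1 + t" "t < n2"
      using i le_Suc_ex not_less by fastforce
    then show ?thesis
      using is_asm_row[OF d2 t(2)] count_below_shuffle_total
      by (subst filter_nonzero_map_count_below[where T = "- S" and g = "d2 t"]) (simp_all add: shuffle_asm_bottom)
  qed
next
  fix k assume k: "k < n1 + n2"
  show "alt_signs (filter (\<lambda>x. x \<noteq> 0) (map (\<lambda>i. D i k) [0..<n1 + n2]))"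
  proof (cases "k \<in> S")
    case True
    have "count_below {..<n1} i = i" if "i < n1" for i
    proof -
      have "{x \<in> {..<n1}. x < i} = {..<i}" using that by auto
      then show ?thesis by (simp add: count_below_def)
    qed
    then have "D i k = (if i \<in> {..<n1} then d1 (count_below {..<n1} i) (count_below S k) else 0)"
      if "i < n1 + n2" for i
      using that k True by (simp add: shuffle_asm_def)
    from filter_nonzero_map_count_below[OF this] show ?thesis
      using is_asm_col[OF d1 count_below_shuffle_less[OF True]] count_below_eq_card[of "{..<n1}" "n1 + n2"]
      by simp
  next
    case False
    have count_bottom: "count_below {n1..} i = i - n1" for i
    proof -
      have "{x \<in> {n1..}. x < i} = {n1..<i}" by auto
      then show ?thesis by (simp add: count_below_def)
    qed
    then have "D i k = (if i \<in> {n1..} then d2 (count_below {n1..} i) (count_below (- S) k) else 0)"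
      if "i < n1 + n2" for i
      using that k False by (simp add: shuffle_asm_def)
    from filter_nonzero_map_count_below[OF this] show ?thesis
      using is_asm_col[OF d2 count_below_compl_shuffle_less[OF k False]]
      by (simp add: count_bottom)
  qed
qed

lemma supp_shuffle_asm: "supp (n1 + n2) D = shuffle_mat n1 n2 S (supp n1 d1) (supp n2 d2)"
proof (intro ext)
  fix i k
  have "card {x \<in> S. x < k} = count_below S k" "card {x. x < k \<and> x \<notin> S} = count_below (- S) k"
    unfolding count_below_def by (auto intro: arg_cong[where f = card])
  then show "supp (n1 + n2) D i k = shuffle_mat n1 n2 S (supp n1 d1) (supp n2 d2) i k"
    using count_below_shuffle_less count_below_compl_shuffle_less
    by (auto simp: supp_def shuffle_mat_def shuffle_asm_def)
qed

lemma phi_shuffle_mat: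
  "(phi s (n1 + n2) (shuffle_mat n1 n2 S (supp n1 d1) (supp n2 d2)) :: 'k::field_char_0 poly fract)
     = qvar ^ (vcount s n1 d1 + vcount s n2 d2) * qvar ^ shuffle_stat s n1 n2 S / qfact (n1 + n2)"
  unfolding phi_def supp_shuffle_asm[symmetric] asm_of_supp[OF is_asm_shuffle_asm] vcount_shuffle_asm
  by (simp add: power_add)

end

theorem proposition4p4:
  fixes s :: vtype
  shows "(phi s 0 empty_mat :: 'k::field_char_0 poly fract) = 1 \<and>
    (\<forall>n1 n2 d1 d2. is_asm n1 d1 \<longrightarrow> is_asm n2 d2 \<longrightarrow>
      (\<Sum>S\<in>shuffle_sets n1 n2. phi s (n1 + n2) (shuffle_mat n1 n2 S (supp n1 d1) (supp n2 d2)))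
        = (phi s n1 (supp n1 d1) :: 'k poly fract) * phi s n2 (supp n2 d2))"
proof (intro conjI allI impI)
  show "(phi s 0 empty_mat :: 'k poly fract) = 1"
    by (simp add: phi_def vcount_def qfact_def)
next
  fix n1 n2 :: nat and d1 d2 :: "nat \<Rightarrow> nat \<Rightarrow> int"
  assume d1: "is_asm n1 d1" and d2: "is_asm n2 d2"
  let ?v1 = "vcount s n1 d1" and ?v2 = "vcount s n2 d2"
  have "(\<Sum>S\<in>shuffle_sets n1 n2. phi s (n1 + n2) (shuffle_mat n1 n2 S (supp n1 d1) (supp n2 d2)))
      = (qvar ^ (?v1 + ?v2) * shuffle_gf s n1 n2 / qfact (n1 + n2) :: 'k poly fract)"
    by (simp add: phi_shuffle_mat d1 d2 shuffle_gf_def sum_distrib_left sum_divide_distrib)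
  also have "\<dots> = qvar ^ ?v1 / qfact n1 * (qvar ^ ?v2 / qfact n2)"
    using shuffle_gf_qfact[of s n1 n2, where 'k = 'k] qfact_nonzero[of "n1 + n2", where 'k = 'k]
      qfact_nonzero[of n1, where 'k = 'k] qfact_nonzero[of n2, where 'k = 'k]
    by (simp add: field_simps power_add)
  also have "\<dots> = phi s n1 (supp n1 d1) * phi s n2 (supp n2 d2)"
    by (simp add: phi_def asm_of_supp d1 d2)
  finally show "(\<Sum>S\<in>shuffle_sets n1 n2. phi s (n1 + n2) (shuffle_mat n1 n2 S (supp n1 d1) (supp n2 d2)))
      = (phi s n1 (supp n1 d1) :: 'k poly fract) * phi s n2 (supp n2 d2)" .
qed

end
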